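(* There is an absolute constant $C$ such that the following holds. Let $f:\mathbb{R}^n\to\{-1,1\}$ and $\epsilon>0$. Suppose there is a linear $k$-junta $g:\mathbb{R}^n\to\{-1,1\}$ and a function $h:\mathbb{R}^n\to\{-1,1\}$ with $\mathsf{surf}(h)\le s$ such that both $g$ and $h$ are $\epsilon$-close to $f$. Then there is a function $\tilde h:\mathbb{R}^n\to\{-1,1\}$ that is a linear $k$-junta and has $\mathsf{surf}(\tilde h)\le s(1+\sqrt\epsilon)$, and which is $C\sqrt\epsilon$-close to $f$.
   Context: $\gamma_n$ is the standard Gaussian measure; $f,g$ are $\epsilon$-close if $\Pr_{x\sim\gamma_n}[f(x)\ne g(x)]\le\epsilon$. A linear $k$-junta is $x\mapsto G(\langle u_1,x\rangle,\dots,\langle u_k,x\rangle)$ for at most $k$ orthonormal vectors $u_i$ and some function $G$. $\mathsf{surf}(h)=\Gamma(\{h=1\})$ where $\Gamma(A)=\liminf_{\delta\to0}\gamma_n(A_\delta\setminus A)/\delta$ and $A_\delta=\{x:d(x,A)\le\delta\}$. *)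

theory Defs
  imports "HOL-Probability.Probability"
begin

text \<open>Euclidean space R^n is represented explicitly (so that the absolute constant C can be
quantified before the dimension n): points are functions nat => real that are extensional
on the index set {..<n}, i.e. elements of the space of the product measure below.\<close>

definition gauss :: "nat \<Rightarrow> (nat \<Rightarrow> real) measure" where
  "gauss n = PiM {..<n} (\<lambda>_. density lborel std_normal_density)"

definition ip :: "nat \<Rightarrow> (nat \<Rightarrow> real) \<Rightarrow> (nat \<Rightarrow> real) \<Rightarrow> real" where
  "ip n u x = (\<Sum>i<n. u i * x i)"

definition edist :: "nat \<Rightarrow> (nat \<Rightarrow> real) \<Rightarrow> (nat \<Rightarrow> real) \<Rightarrow> real" where
  "edist n x y = sqrt (\<Sum>i<n. (x i - y i)\<^sup>2)"

text \<open>Closed delta-neighbourhood A_delta = {x : d(x,A) <= delta} (empty if A is empty,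
since d(x, empty) = infinity).\<close>
definition nbhd :: "nat \<Rightarrow> (nat \<Rightarrow> real) set \<Rightarrow> real \<Rightarrow> (nat \<Rightarrow> real) set" where
  "nbhd n A \<delta> = {x \<in> space (gauss n). A \<noteq> {} \<and> (INF a\<in>A. edist n x a) \<le> \<delta>}"

definition gsurf_set :: "nat \<Rightarrow> (nat \<Rightarrow> real) set \<Rightarrow> ereal" where
  "gsurf_set n A = Liminf (at_right 0)
      (\<lambda>\<delta>. ereal (measure (gauss n) (nbhd n A \<delta> - A) / \<delta>))"

definition surf :: "nat \<Rightarrow> ((nat \<Rightarrow> real) \<Rightarrow> real) \<Rightarrow> ereal" where
  "surf n h = gsurf_set n {x \<in> space (gauss n). h x = 1}"

definition boolean_fun :: "nat \<Rightarrow> ((nat \<Rightarrow> real) \<Rightarrow> real) \<Rightarrow> bool" where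
  "boolean_fun n f \<longleftrightarrow> f \<in> borel_measurable (gauss n) \<and>
      (\<forall>x\<in>space (gauss n). f x \<in> {-1, 1})"

definition eps_close :: "nat \<Rightarrow> real \<Rightarrow> ((nat \<Rightarrow> real) \<Rightarrow> real) \<Rightarrow> ((nat \<Rightarrow> real) \<Rightarrow> real) \<Rightarrow> bool" where
  "eps_close n \<epsilon> f g \<longleftrightarrow> measure (gauss n) {x \<in> space (gauss n). f x \<noteq> g x} \<le> \<epsilon>"

definition linear_junta :: "nat \<Rightarrow> nat \<Rightarrow> ((nat \<Rightarrow> real) \<Rightarrow> real) \<Rightarrow> bool" where
  "linear_junta n k f \<longleftrightarrow> (\<exists>U G. finite U \<and> card U \<le> k \<and> U \<subseteq> space (gauss n) \<and>
      (\<forall>u\<in>U. ip n u u = 1) \<and> (\<forall>u\<in>U. \<forall>v\<in>U. u \<noteq> v \<longrightarrow> ip n u v = 0) \<and>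
      (\<forall>x\<in>space (gauss n). f x = G (\<lambda>u\<in>U. ip n u x)))"

end

theory Submission
  imports Defs
begin

text \<open>Let \<open>U\<close> be the orthonormal directions on which the junta \<open>g\<close> depends and \<open>P\<close> the
  orthogonal projection onto \<open>span U\<close>. For independent standard Gaussians \<open>z\<close> and \<open>x\<close>, the
  point \<open>z - P z + P x\<close> is again standard Gaussian: it is the image of \<open>(z, x) \<in> \<real>\<^sup>2\<^sup>n\<close>
  under an orthogonal map, followed by the projection to the first factor. Hence the random
  restrictions \<open>h\<^sub>z(x) = h(z - P z + P x)\<close>, which are linear \<open>k\<close>-juntas, have on average
  surface area at most \<open>surf(h) \<le> s\<close> (the map \<open>x \<mapsto> z - P z + P x\<close> is 1-Lipschitz, so
  boundary layers of \<open>{h\<^sub>z = 1}\<close> lie in preimages of boundary layers of \<open>{h = 1}\<close>), and, since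
  \<open>g\<close> is invariant under the restriction, on average \<open>Pr[h\<^sub>z \<noteq> g] = Pr[h \<noteq> g] \<le> 2\<epsilon>\<close>.
  Markov's inequality for both averages gives a \<open>z\<close> with \<open>surf(h\<^sub>z) \<le> s(1 + \<surd>\<epsilon>)\<close> and
  \<open>Pr[h\<^sub>z \<noteq> g] \<le> 5\<surd>\<epsilon>\<close>, so \<open>h\<^sub>z\<close> is \<open>6\<surd>\<epsilon>\<close>-close to \<open>f\<close> when \<open>\<epsilon> \<le> 1\<close>; for \<open>\<epsilon> > 1\<close> a
  constant function works.

  Invariance of the Gaussian measure under the orthogonal map (a product of reflections) is
  reduced, via Givens rotations, to the invariance of Lebesgue measure under shears and
  sign changes of a single coordinate.\<close>

section \<open>The Gaussian space and measure-preserving maps\<close>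

abbreviation std_normal_measure :: "real measure" where
  "std_normal_measure \<equiv> density lborel (\<lambda>x. ennreal (std_normal_density x))"

definition lborelN :: "nat \<Rightarrow> (nat \<Rightarrow> real) measure" where
  "lborelN n = PiM {..<n} (\<lambda>_. lborel)"

definition gauss_pdf :: "nat \<Rightarrow> (nat \<Rightarrow> real) \<Rightarrow> real" where
  "gauss_pdf n x = (\<Prod>i<n. std_normal_density (x i))"

lemma prob_space_gauss: "prob_space (gauss n)"
  unfolding gauss_def by (auto intro!: prob_space_PiM prob_space_normal_density)

lemma sigma_finite_gauss: "sigma_finite_measure (gauss n)"
  using prob_space_gauss by (rule prob_space_imp_sigma_finite)

lemma space_gauss: "space (gauss n) = PiE {..<n} (\<lambda>_. UNIV)"
  unfolding gauss_def by (simp add: space_PiM)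

lemma restrict_in_space_gauss [simp]: "restrict f {..<n} \<in> space (gauss n)"
  by (simp add: space_gauss)

lemma measurable_coord_gauss:
  "k < n \<Longrightarrow> (\<lambda>w. w k) \<in> measurable (gauss n) std_normal_measure"
  unfolding gauss_def by (rule measurable_component_singleton) auto

lemma borel_measurable_coord_gauss: "k < n \<Longrightarrow> (\<lambda>w. w k) \<in> borel_measurable (gauss n)"
  using measurable_coord_gauss[of k n] by (simp cong: measurable_cong_sets)

lemma borel_measurable_ip_gauss: "ip n e \<in> borel_measurable (gauss n)"
  unfolding ip_def
  by (intro borel_measurable_sum borel_measurable_times) (auto intro: borel_measurable_coord_gauss)

lemma measurable_into_gauss:
  assumes "\<And>k. k < n \<Longrightarrow> (\<lambda>x. F x k) \<in> borel_measurable M"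
  shows "(\<lambda>x. restrict (F x) {..<n}) \<in> measurable M (gauss n)"
  unfolding gauss_def
  by (rule measurable_restrict) (use assms in \<open>simp cong: measurable_cong_sets\<close>)

lemma gauss_pdf_eq: "gauss_pdf n x = (1 / sqrt (2 * pi)) ^ n * exp (- ip n x x / 2)"
proof -
  have "gauss_pdf n x = (\<Prod>i<n. exp (- (x i)\<^sup>2 / 2)) / sqrt (2 * pi) ^ n"
    unfolding gauss_pdf_def std_normal_density_def by (simp add: prod_dividef)
  also have "(\<Prod>i<n. exp (- (x i)\<^sup>2 / 2)) = exp (\<Sum>i<n. - (x i)\<^sup>2 / 2)"
    by (simp add: exp_sum)
  also have "(\<Sum>i<n. - (x i)\<^sup>2 / 2) = - ip n x x / 2"
    by (simp add: ip_def sum_divide_distrib sum_negf power2_eq_square)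
  finally show ?thesis by (simp add: power_divide)
qed

lemma borel_measurable_gauss_pdf [measurable]: "gauss_pdf n \<in> borel_measurable (lborelN n)"
  unfolding gauss_pdf_def lborelN_def by measurable

lemma gauss_eq_density: "gauss n = density (lborelN n) (gauss_pdf n)"
proof -
  interpret product_sigma_finite "\<lambda>_. lborel :: real measure" by standard
  have "density (lborelN n) (gauss_pdf n) = PiM {..<n} (\<lambda>_. std_normal_measure)"
  proof (rule product_sigma_finite.PiM_eqI)
    show "product_sigma_finite (\<lambda>_. std_normal_measure)"
      by (simp add: product_sigma_finite.intro prob_space_imp_sigma_finite prob_space_normal_density)
    show "sets (density (lborelN n) (gauss_pdf n)) = sets (PiM {..<n} (\<lambda>_. std_normal_measure))"
      unfolding lborelN_def sets_density by (intro sets_PiM_cong) auto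
    fix A assume "\<And>i. i \<in> {..<n} \<Longrightarrow> A i \<in> sets std_normal_measure"
    then have A: "\<And>i. i \<in> {..<n} \<Longrightarrow> A i \<in> sets borel" by simp
    have "emeasure (density (lborelN n) (gauss_pdf n)) (Pi\<^sub>E {..<n} A)
       = (\<integral>\<^sup>+x. ennreal (gauss_pdf n x) * indicator (Pi\<^sub>E {..<n} A) x \<partial>lborelN n)"
      using A borel_measurable_gauss_pdf[of n] unfolding lborelN_def
      by (subst emeasure_density) (auto intro!: sets_PiM_I_finite)
    also have "\<dots> = (\<integral>\<^sup>+x. (\<Prod>i<n. ennreal (std_normal_density (x i)) * indicator (A i) (x i)) \<partial>lborelN n)"
      unfolding lborelN_def
      by (intro nn_integral_cong)
         (auto simp: gauss_pdf_def indicator_def prod_ennreal prod.distrib space_PiM PiE_iff)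
    also have "\<dots> = (\<Prod>i<n. (\<integral>\<^sup>+y. ennreal (std_normal_density y) * indicator (A i) y \<partial>lborel))"
      unfolding lborelN_def using A by (subst product_nn_integral_prod) auto
    also have "\<dots> = (\<Prod>i<n. emeasure std_normal_measure (A i))"
      using A by (intro prod.cong refl) (simp add: emeasure_density)
    finally show "emeasure (density (lborelN n) (gauss_pdf n)) (Pi\<^sub>E {..<n} A)
      = (\<Prod>i<n. emeasure std_normal_measure (A i))" .
  qed auto
  then show ?thesis unfolding gauss_def by simp
qed

definition preserves_measure :: "'a measure \<Rightarrow> ('a \<Rightarrow> 'a) \<Rightarrow> bool" where
  "preserves_measure M F \<longleftrightarrow> F \<in> measurable M M \<and> distr M M F = M"

lemma preserves_measure_comp:
  "preserves_measure M F \<Longrightarrow> preserves_measure M G \<Longrightarrow> preserves_measure M (G \<circ> F)"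
  unfolding preserves_measure_def by (auto simp: distr_distr[symmetric])

lemma preserves_measure_cong:
  "preserves_measure M F \<Longrightarrow> (\<And>x. x \<in> space M \<Longrightarrow> F x = G x) \<Longrightarrow> preserves_measure M G"
  unfolding preserves_measure_def by (metis distr_cong measurable_cong)

lemma preserves_measure_id: "preserves_measure M (\<lambda>x. x)"
  unfolding preserves_measure_def by (simp add: distr_id2)

lemma preserves_measure_space:
  "preserves_measure M F \<Longrightarrow> x \<in> space M \<Longrightarrow> F x \<in> space M"
  using measurable_space[of F M M x] unfolding preserves_measure_def by simp

lemma preserves_measure_density:
  assumes F: "preserves_measure M F" and f: "f \<in> borel_measurable M"
    and f_inv: "\<And>x. x \<in> space M \<Longrightarrow> f (F x) = f x"
  shows "preserves_measure (density M f) F"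
proof -
  have Fm: "F \<in> measurable M M" and D: "distr M M F = M"
    using F unfolding preserves_measure_def by auto
  have Fm': "F \<in> measurable (density M f) (density M f)"
    using Fm by (simp cong: measurable_cong_sets)
  have "distr (density M f) (density M f) F = density M f"
  proof (rule measure_eqI)
    fix A assume "A \<in> sets (distr (density M f) (density M f) F)"
    then have A: "A \<in> sets M" by simp
    have "emeasure (distr (density M f) (density M f) F) A = emeasure (density M f) (F -` A \<inter> space M)"
      using A Fm' by (simp add: emeasure_distr)
    also have "\<dots> = (\<integral>\<^sup>+x. f x * indicator (F -` A \<inter> space M) x \<partial>M)"
      using f measurable_sets[OF Fm A] by (rule emeasure_density)
    also have "\<dots> = (\<integral>\<^sup>+x. f (F x) * indicator A (F x) \<partial>M)"
      by (intro nn_integral_cong) (auto simp: f_inv indicator_def)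
    also have "\<dots> = (\<integral>\<^sup>+y. f y * indicator A y \<partial>distr M M F)"
      using A Fm f by (intro nn_integral_distr[symmetric]) auto
    also have "\<dots> = emeasure (density M f) A"
      using A f by (simp add: D emeasure_density)
    finally show "emeasure (distr (density M f) (density M f) F) A = emeasure (density M f) A" .
  qed simp
  with Fm' show ?thesis unfolding preserves_measure_def by simp
qed

lemma preserves_gauss_if_isometry:
  assumes "preserves_measure (lborelN n) F"
    and "\<And>x. x \<in> space (lborelN n) \<Longrightarrow> ip n (F x) (F x) = ip n x x"
  shows "preserves_measure (gauss n) F"
  unfolding gauss_eq_density
proof (rule preserves_measure_density[OF assms(1)])
  fix x assume "x \<in> space (lborelN n)"
  then show "ennreal (gauss_pdf n (F x)) = ennreal (gauss_pdf n x)"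
    using assms(2) by (simp add: gauss_pdf_eq)
qed measurable

definition coord_update :: "nat \<Rightarrow> nat \<Rightarrow> ((nat \<Rightarrow> real) \<Rightarrow> real) \<Rightarrow> (nat \<Rightarrow> real) \<Rightarrow> (nat \<Rightarrow> real)" where
  "coord_update n i \<phi> x = (\<lambda>k\<in>{..<n}. if k = i then \<phi> x else x k)"

lemma measurable_coord_update:
  assumes "i < n" and \<phi>: "\<phi> \<in> borel_measurable (lborelN n)"
  shows "coord_update n i \<phi> \<in> measurable (lborelN n) (lborelN n)"
  unfolding coord_update_def lborelN_def
proof (rule measurable_restrict)
  fix k assume "k \<in> {..<n}"
  then show "(\<lambda>x. if k = i then \<phi> x else x k) \<in> measurable (PiM {..<n} (\<lambda>_. lborel)) lborel"
    using \<phi> unfolding lborelN_def by (cases "k = i") auto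
qed

lemma nn_integral_lborelN_coord:
  assumes i: "i < n" and g: "g \<in> borel_measurable (lborelN n)"
  shows "(\<integral>\<^sup>+x. g x \<partial>lborelN n) = (\<integral>\<^sup>+x. (\<integral>\<^sup>+y. g (x(i := y)) \<partial>lborel) \<partial>PiM ({..<n} - {i}) (\<lambda>_. lborel))"
proof -
  interpret product_sigma_finite "\<lambda>_. lborel :: real measure" by standard
  have "lborelN n = PiM (insert i ({..<n} - {i})) (\<lambda>_. lborel)"
    unfolding lborelN_def using i by (simp add: insert_absorb)
  then show ?thesis
    using g by (simp only:) (intro product_nn_integral_insert, auto)
qed

text \<open>Fubini in the coordinate \<open>i\<close> and translation/reflection invariance of \<open>lborel\<close>.\<close>

lemma preserves_lborelN_coord_update:
  fixes \<tau> :: "(nat \<Rightarrow> real) \<Rightarrow> real"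
  assumes i: "i < n" and \<sigma>: "\<bar>\<sigma>\<bar> = 1"
    and [measurable]: "\<tau> \<in> borel_measurable (lborelN n)"
    and \<tau>_indep: "\<And>x y. \<tau> (x(i := y)) = \<tau> x"
  shows "preserves_measure (lborelN n) (coord_update n i (\<lambda>x. \<sigma> * x i + \<tau> x))"
proof -
  define F where "F = coord_update n i (\<lambda>x. \<sigma> * x i + \<tau> x)"
  have "(\<lambda>x. x i) \<in> borel_measurable (lborelN n)"
    unfolding lborelN_def measurable_lborel1[symmetric] using i by (intro measurable_component_singleton) auto
  then have "(\<lambda>x. \<sigma> * x i + \<tau> x) \<in> borel_measurable (lborelN n)"
    by measurable
  then have Fm: "F \<in> measurable (lborelN n) (lborelN n)"
    unfolding F_def using i by (intro measurable_coord_update)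
  have "distr (lborelN n) (lborelN n) F = lborelN n"
  proof (rule measure_eqI)
    fix A assume "A \<in> sets (distr (lborelN n) (lborelN n) F)"
    then have A: "A \<in> sets (lborelN n)" by simp
    let ?I = "{..<n} - {i}"
    have "emeasure (distr (lborelN n) (lborelN n) F) A = (\<integral>\<^sup>+x. indicator A (F x) \<partial>lborelN n)"
      using A Fm by (simp add: nn_integral_distr[symmetric])
    also have "\<dots> = (\<integral>\<^sup>+x. (\<integral>\<^sup>+y. indicator A (F (x(i := y))) \<partial>lborel) \<partial>PiM ?I (\<lambda>_. lborel))"
      using A Fm by (intro nn_integral_lborelN_coord i) simp
    also have "\<dots> = (\<integral>\<^sup>+x. (\<integral>\<^sup>+y. indicator A (x(i := y)) \<partial>lborel) \<partial>PiM ?I (\<lambda>_. lborel))"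
    proof (rule nn_integral_cong)
      fix x assume x: "x \<in> space (PiM ?I (\<lambda>_. lborel :: real measure))"
      have F_upd: "F (x(i := y)) = x(i := \<sigma> * y + \<tau> x)" for y
        using x i by (auto simp: F_def coord_update_def \<tau>_indep space_PiM PiE_def extensional_def fun_eq_iff)
      have "(\<lambda>y. x(i := y)) \<in> measurable lborel (PiM (insert i ?I) (\<lambda>_. lborel))"
        using x by (intro measurable_component_update) auto
      then have "(\<lambda>y. indicator A (x(i := y)) :: ennreal) \<in> borel_measurable borel"
        using A i unfolding lborelN_def by (simp add: insert_absorb)
      then have "(\<integral>\<^sup>+y. indicator A (x(i := y)) \<partial>lborel)
          = ennreal \<bar>\<sigma>\<bar> * (\<integral>\<^sup>+y. indicator A (x(i := \<tau> x + \<sigma> * y)) \<partial>lborel)"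
        using \<sigma> by (intro nn_integral_real_affine) auto
      then show "(\<integral>\<^sup>+y. indicator A (F (x(i := y))) \<partial>lborel) = (\<integral>\<^sup>+y. indicator A (x(i := y)) \<partial>lborel)"
        using \<sigma> by (simp add: F_upd add.commute)
    qed
    also have "\<dots> = emeasure (lborelN n) A"
      using A by (simp add: nn_integral_lborelN_coord[OF i, symmetric])
    finally show "emeasure (distr (lborelN n) (lborelN n) F) A = emeasure (lborelN n) A" .
  qed simp
  with Fm show ?thesis unfolding preserves_measure_def F_def by simp
qed

section \<open>Rotations and reflections\<close>

definition add_scaled :: "nat \<Rightarrow> (nat \<Rightarrow> real) \<Rightarrow> real \<Rightarrow> (nat \<Rightarrow> real) \<Rightarrow> (nat \<Rightarrow> real)" where
  "add_scaled n a r b = (\<lambda>k\<in>{..<n}. a k + r * b k)"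

definition rotation :: "nat \<Rightarrow> nat \<Rightarrow> nat \<Rightarrow> real \<Rightarrow> real \<Rightarrow> (nat \<Rightarrow> real) \<Rightarrow> (nat \<Rightarrow> real)" where
  "rotation n i j c s = (\<lambda>x. \<lambda>k\<in>{..<n}.
     if k = i then c * x i - s * x j else if k = j then s * x i + c * x j else x k)"

lemma sum_lessThan_split2:
  fixes f :: "nat \<Rightarrow> real"
  assumes "i < n" "j < n" "i \<noteq> j"
  shows "(\<Sum>k<n. f k) = f i + f j + (\<Sum>k\<in>{..<n} - {i, j}. f k)"
proof -
  have "(\<Sum>k<n. f k) = f i + (\<Sum>k\<in>{..<n} - {i}. f k)"
    using assms by (simp add: sum.remove)
  also have "(\<Sum>k\<in>{..<n} - {i}. f k) = f j + (\<Sum>k\<in>{..<n} - {i} - {j}. f k)"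
    using assms by (subst sum.remove[of _ j]) auto
  finally show ?thesis by (simp add: Diff_insert2[symmetric] insert_commute add.assoc)
qed

lemma ip_rotation:
  assumes ij: "i < n" "j < n" "i \<noteq> j" and cs: "c\<^sup>2 + s\<^sup>2 = 1"
  shows "ip n (rotation n i j c s a) (rotation n i j c s b) = ip n a b"
proof -
  have "(c * a i - s * a j) * (c * b i - s * b j) + (s * a i + c * a j) * (s * b i + c * b j)
      = (c\<^sup>2 + s\<^sup>2) * (a i * b i + a j * b j)"
    by (simp add: algebra_simps power2_eq_square)
  then have "(c * a i - s * a j) * (c * b i - s * b j) + (s * a i + c * a j) * (s * b i + c * b j)
      = a i * b i + a j * b j" using cs by simp
  then show ?thesis
    unfolding ip_def using ij by (subst (1 2) sum_lessThan_split2[OF ij]) (simp add: rotation_def add.assoc)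
qed

text \<open>A rotation by an angle other than \<open>\<pi>\<close> is the product of three shears
  \<open>x\<^sub>i += a x\<^sub>j\<close>, \<open>x\<^sub>j += s x\<^sub>i\<close>, \<open>x\<^sub>i += a x\<^sub>j\<close> with \<open>a = -s / (1 + c)\<close>.\<close>

lemma preserves_lborelN_rotation:
  assumes ij: "i < n" "j < n" "i \<noteq> j" and cs: "c\<^sup>2 + s\<^sup>2 = 1" and c: "c \<noteq> -1"
  shows "preserves_measure (lborelN n) (rotation n i j c s)"
proof -
  define shear where "shear i j t = coord_update n i (\<lambda>x. 1 * x i + t * x j)" for i j t
  have shear: "preserves_measure (lborelN n) (shear i j t)" if "i < n" "j < n" "i \<noteq> j" for i j t
    unfolding shear_def using that
    by (intro preserves_lborelN_coord_update) (auto simp: lborelN_def)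
  have c1: "1 + c \<noteq> 0" using c by linarith
  define a where "a = - s / (1 + c)"
  have e1: "1 + a * s = c"
  proof -
    have "1 + a * s = (1 + c - s\<^sup>2) / (1 + c)" using c1 by (simp add: a_def field_simps power2_eq_square)
    also have "\<dots> = (c + c\<^sup>2) / (1 + c)" using cs by (simp add: algebra_simps)
    also have "\<dots> = c" using c1 by (simp add: field_simps power2_eq_square)
    finally show ?thesis .
  qed
  have e2: "a * (2 + a * s) = - s"
  proof -
    have "a * (2 + a * s) = a * (1 + c)" using e1 by simp
    also have "\<dots> = - s" using c1 by (simp add: a_def)
    finally show ?thesis .
  qed
  have "rotation n i j c s x = (shear i j a \<circ> shear j i s \<circ> shear i j a) x" for x
  proof -
    have "x i + a * x j + a * (x j + s * (x i + a * x j)) = (1 + a * s) * x i + a * (2 + a * s) * x j"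
      by (simp add: algebra_simps)
    moreover have "x j + s * (x i + a * x j) = s * x i + (1 + a * s) * x j"
      by (simp add: algebra_simps)
    ultimately show ?thesis
      using ij e1 e2 by (auto simp: shear_def coord_update_def rotation_def fun_eq_iff)
  qed
  then show ?thesis
    using ij by (metis preserves_measure_comp preserves_measure_cong shear)
qed

lemma preserves_gauss_rotation:
  assumes "i < n" "j < n" "i \<noteq> j" "c\<^sup>2 + s\<^sup>2 = 1" "c \<noteq> -1"
  shows "preserves_measure (gauss n) (rotation n i j c s)"
  using assms by (intro preserves_gauss_if_isometry preserves_lborelN_rotation ip_rotation)

definition gauss_isometry :: "nat \<Rightarrow> ((nat \<Rightarrow> real) \<Rightarrow> (nat \<Rightarrow> real)) \<Rightarrow> bool" where
  "gauss_isometry n G \<longleftrightarrow>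
     (\<forall>a\<in>space (gauss n). \<forall>b\<in>space (gauss n). \<forall>r. G (add_scaled n a r b) = add_scaled n (G a) r (G b)) \<and>
     (\<forall>a\<in>space (gauss n). \<forall>b\<in>space (gauss n). ip n (G a) (G b) = ip n a b) \<and>
     preserves_measure (gauss n) G \<and>
     (\<exists>G'. preserves_measure (gauss n) G' \<and> (\<forall>x\<in>space (gauss n). G' (G x) = x))"

lemma gauss_isometry_id: "gauss_isometry n (\<lambda>x. x)"
  unfolding gauss_isometry_def using preserves_measure_id by blast

lemma gauss_isometry_comp:
  assumes F: "gauss_isometry n F" and G: "gauss_isometry n G"
  shows "gauss_isometry n (G \<circ> F)"
proof -
  obtain F' where F': "preserves_measure (gauss n) F'" "\<forall>x\<in>space (gauss n). F' (F x) = x"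
    using F unfolding gauss_isometry_def by blast
  obtain G' where G': "preserves_measure (gauss n) G'" "\<forall>x\<in>space (gauss n). G' (G x) = x"
    using G unfolding gauss_isometry_def by blast
  have F_pres: "preserves_measure (gauss n) F" and G_pres: "preserves_measure (gauss n) G"
    using F G unfolding gauss_isometry_def by blast+
  have F_space: "F x \<in> space (gauss n)" if "x \<in> space (gauss n)" for x
    using F_pres that by (rule preserves_measure_space)
  have "preserves_measure (gauss n) (F' \<circ> G')"
    using G'(1) F'(1) by (rule preserves_measure_comp)
  moreover have "\<forall>x\<in>space (gauss n). (F' \<circ> G') ((G \<circ> F) x) = x"
    using F'(2) G'(2) F_space by simp
  moreover have "preserves_measure (gauss n) (G \<circ> F)"
    using F_pres G_pres by (rule preserves_measure_comp)
  moreover have "(G \<circ> F) (add_scaled n a r b) = add_scaled n ((G \<circ> F) a) r ((G \<circ> F) b)"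
    and "ip n ((G \<circ> F) a) ((G \<circ> F) b) = ip n a b"
    if "a \<in> space (gauss n)" "b \<in> space (gauss n)" for a b r
    using that F G F_space unfolding gauss_isometry_def by simp_all
  ultimately show ?thesis unfolding gauss_isometry_def by blast
qed

lemma gauss_isometry_rotation:
  assumes ij: "i < n" "j < n" "i \<noteq> j" and cs: "c\<^sup>2 + s\<^sup>2 = 1" and c: "c \<noteq> -1"
  shows "gauss_isometry n (rotation n i j c s)"
proof -
  have "rotation n i j c (-s) (rotation n i j c s x) = x" if "x \<in> space (gauss n)" for x
  proof -
    have "c * (c * x i - s * x j) + s * (s * x i + c * x j) = (c\<^sup>2 + s\<^sup>2) * x i"
      "- s * (c * x i - s * x j) + c * (s * x i + c * x j) = (c\<^sup>2 + s\<^sup>2) * x j"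
      by (simp_all add: algebra_simps power2_eq_square)
    then show ?thesis
      using ij cs that by (auto simp: rotation_def space_gauss PiE_def extensional_def fun_eq_iff)
  qed
  moreover have "preserves_measure (gauss n) (rotation n i j c (-s))"
    using assms by (intro preserves_gauss_rotation) auto
  ultimately show ?thesis
    unfolding gauss_isometry_def
    using preserves_gauss_rotation[OF assms] ip_rotation[OF ij cs] ij
    by (auto simp: rotation_def add_scaled_def fun_eq_iff algebra_simps)
qed

text \<open>Each step is a Givens rotation in the plane \<open>(i\<^sub>0, j)\<close> that moves the \<open>j\<close>-th
  coordinate of \<open>e\<close> onto the \<open>i\<^sub>0\<close>-th.\<close>

lemma gauss_isometry_clear_coords:
  assumes e: "e \<in> space (gauss n)" and i0: "i0 < n"
    and J: "finite J" "J \<subseteq> {..<n} - {i0}"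
  shows "\<exists>G. gauss_isometry n G \<and> (\<forall>k\<in>J. G e k = 0) \<and> (\<forall>k\<in>{..<n} - J - {i0}. G e k = e k)"
  using J
proof (induction J rule: finite_induct)
  case empty
  show ?case using gauss_isometry_id by auto
next
  case (insert j J)
  then obtain G where G: "gauss_isometry n G" "\<forall>k\<in>J. G e k = 0" "\<forall>k\<in>{..<n} - J - {i0}. G e k = e k"
    by auto
  have j: "j < n" "j \<noteq> i0" using insert by auto
  define a where "a = G e i0"
  define b where "b = G e j"
  show ?case
  proof (cases "b = 0")
    case True
    then show ?thesis using G j unfolding b_def by auto
  next
    case False
    then have b: "b \<noteq> 0" .
    define r where "r = sqrt (a\<^sup>2 + b\<^sup>2)"
    have r: "r > 0" "r\<^sup>2 = a\<^sup>2 + b\<^sup>2"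
      using b unfolding r_def by (simp_all add: add_nonneg_pos)
    define c where "c = a / r"
    define s where "s = - b / r"
    have "c\<^sup>2 + s\<^sup>2 = (a\<^sup>2 + b\<^sup>2) / r\<^sup>2"
      by (simp add: c_def s_def power_divide add_divide_distrib)
    then have cs: "c\<^sup>2 + s\<^sup>2 = 1" using r b by simp
    have "s \<noteq> 0" using b r(1) by (simp add: s_def)
    then have c: "c \<noteq> -1" using cs by auto
    have zj: "s * a + c * b = 0" using r by (simp add: c_def s_def field_simps)
    let ?R = "rotation n i0 j c s"
    have "gauss_isometry n (?R \<circ> G)"
      using G(1) gauss_isometry_rotation[OF i0 j(1) j(2)[symmetric] cs c] by (rule gauss_isometry_comp)
    moreover have "\<forall>k\<in>insert j J. (?R \<circ> G) e k = 0"
      using G(2) zj i0 j insert.prems by (auto simp: rotation_def a_def b_def)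
    moreover have "\<forall>k\<in>{..<n} - insert j J - {i0}. (?R \<circ> G) e k = e k"
      using G(3) by (auto simp: rotation_def)
    ultimately show ?thesis by blast
  qed
qed

definition reflection :: "nat \<Rightarrow> (nat \<Rightarrow> real) \<Rightarrow> (nat \<Rightarrow> real) \<Rightarrow> (nat \<Rightarrow> real)" where
  "reflection n e w = add_scaled n w (-2 * ip n e w) e"

text \<open>Conjugating by a Gaussian isometry that maps \<open>e\<close> to \<open>\<pm>e\<^sub>0\<close> turns the reflection into the
  sign change of the first coordinate.\<close>

lemma preserves_gauss_reflection:
  assumes e: "e \<in> space (gauss n)" and e1: "ip n e e = 1"
  shows "preserves_measure (gauss n) (reflection n e)"
proof -
  have n: "0 < n" using e1 by (cases n) (auto simp: ip_def)
  obtain G where G: "gauss_isometry n G" "\<forall>k\<in>{..<n} - {0}. G e k = 0"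
    using gauss_isometry_clear_coords[OF e n, of "{..<n} - {0}"] by auto
  obtain G' where G': "preserves_measure (gauss n) G'" "\<forall>x\<in>space (gauss n). G' (G x) = x"
    using G(1) unfolding gauss_isometry_def by blast
  have G_pres: "preserves_measure (gauss n) G" using G(1) unfolding gauss_isometry_def by blast
  define v where "v = G e"
  have v0: "v k = 0" if "k \<in> {..<n} - {0}" for k
    using G(2) that by (simp add: v_def)
  have ip_v: "ip n v w = v 0 * w 0" for w
  proof -
    have "ip n v w = v 0 * w 0 + (\<Sum>k\<in>{..<n} - {0}. v k * w k)"
      unfolding ip_def using n by (simp add: sum.remove)
    also have "(\<Sum>k\<in>{..<n} - {0}. v k * w k) = 0"
      using v0 by (intro sum.neutral) auto
    finally show ?thesis by simp
  qed
  have "v 0 * v 0 = 1"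
    using ip_v[of v] G(1) e e1 unfolding v_def gauss_isometry_def by simp
  then have neg: "reflection n v = coord_update n 0 (\<lambda>x. (-1) * x 0 + 0)"
    using v0 by (auto simp: reflection_def add_scaled_def coord_update_def ip_v fun_eq_iff algebra_simps)
  have "preserves_measure (lborelN n) (coord_update n 0 (\<lambda>x. (-1) * x 0 + 0))"
    using n by (intro preserves_lborelN_coord_update) auto
  then have "preserves_measure (gauss n) (reflection n v)"
    by (subst neg, intro preserves_gauss_if_isometry)
       (auto simp: ip_def coord_update_def intro!: sum.cong)
  then have "preserves_measure (gauss n) (G' \<circ> reflection n v \<circ> G)"
    using G_pres G' by (intro preserves_measure_comp)
  moreover have "(G' \<circ> reflection n v \<circ> G) w = reflection n e w" if w: "w \<in> space (gauss n)" for w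
  proof -
    have "G (reflection n e w) = reflection n v (G w)"
      using G(1) w e unfolding gauss_isometry_def reflection_def v_def by simp
    moreover have "G' (G (reflection n e w)) = reflection n e w"
      using G'(2) by (simp add: reflection_def add_scaled_def)
    ultimately show ?thesis by simp
  qed
  ultimately show ?thesis by (rule preserves_measure_cong)
qed

definition reflect_orthonormal :: "nat \<Rightarrow> (nat \<Rightarrow> real) set \<Rightarrow> (nat \<Rightarrow> real) \<Rightarrow> (nat \<Rightarrow> real)" where
  "reflect_orthonormal n E w = (\<lambda>k\<in>{..<n}. w k - 2 * (\<Sum>e\<in>E. ip n e w * e k))"

definition orthonormal :: "nat \<Rightarrow> (nat \<Rightarrow> real) set \<Rightarrow> bool" where
  "orthonormal n U \<longleftrightarrow> finite U \<and> U \<subseteq> space (gauss n) \<and> (\<forall>u\<in>U. ip n u u = 1) \<and>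
     (\<forall>u\<in>U. \<forall>v\<in>U. u \<noteq> v \<longrightarrow> ip n u v = 0)"

lemma orthonormal_insert:
  "e \<notin> U \<Longrightarrow> orthonormal n (insert e U) \<longleftrightarrow>
     orthonormal n U \<and> e \<in> space (gauss n) \<and> ip n e e = 1 \<and> (\<forall>u\<in>U. ip n e u = 0 \<and> ip n u e = 0)"
  unfolding orthonormal_def by auto

lemma ip_sum_orthonormal:
  assumes "orthonormal n U" "u \<in> U"
  shows "(\<Sum>v\<in>U. c v * ip n u v) = c u"
proof -
  have "(\<Sum>v\<in>U. c v * ip n u v) = c u * ip n u u + (\<Sum>v\<in>U - {u}. c v * ip n u v)"
    using assms by (simp add: orthonormal_def sum.remove)
  also have "(\<Sum>v\<in>U - {u}. c v * ip n u v) = 0"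
    using assms by (intro sum.neutral) (auto simp: orthonormal_def)
  finally show ?thesis using assms by (simp add: orthonormal_def)
qed

lemma ip_reflect_orthogonal:
  assumes "finite E" "\<forall>e'\<in>E. ip n e e' = 0"
  shows "ip n e (reflect_orthonormal n E w) = ip n e w"
proof -
  have "ip n e (reflect_orthonormal n E w) = ip n e w - 2 * (\<Sum>i<n. \<Sum>e'\<in>E. ip n e' w * (e i * e' i))"
    unfolding ip_def reflect_orthonormal_def
    by (simp add: algebra_simps sum_distrib_left sum_subtractf)
  also have "(\<Sum>i<n. \<Sum>e'\<in>E. ip n e' w * (e i * e' i)) = (\<Sum>e'\<in>E. ip n e' w * ip n e e')"
    unfolding ip_def by (subst sum.swap) (simp add: sum_distrib_left)
  also have "\<dots> = 0" using assms by simp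
  finally show ?thesis by simp
qed

lemma preserves_gauss_reflect_orthonormal:
  "orthonormal n E \<Longrightarrow> preserves_measure (gauss n) (reflect_orthonormal n E)"
proof (induction E rule: infinite_finite_induct)
  case (infinite E)
  then show ?case by (simp add: orthonormal_def)
next
  case empty
  show ?case
    by (rule preserves_measure_cong[OF preserves_measure_id])
       (auto simp: reflect_orthonormal_def space_gauss PiE_def extensional_def fun_eq_iff)
next
  case (insert e E)
  have "preserves_measure (gauss n) (reflection n e \<circ> reflect_orthonormal n E)"
    using insert by (intro preserves_measure_comp preserves_gauss_reflection) (auto simp: orthonormal_insert)
  moreover have "ip n e (reflect_orthonormal n E w) = ip n e w" for w
    using insert by (intro ip_reflect_orthogonal) (auto simp: orthonormal_insert)
  then have "(reflection n e \<circ> reflect_orthonormal n E) w = reflect_orthonormal n (insert e E) w" for w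
    using insert(1,2)
    by (auto simp: reflection_def add_scaled_def reflect_orthonormal_def fun_eq_iff algebra_simps)
  ultimately show ?case by (rule preserves_measure_cong)
qed

section \<open>Resampling the component in a subspace\<close>

definition stack :: "nat \<Rightarrow> (nat \<Rightarrow> real) \<times> (nat \<Rightarrow> real) \<Rightarrow> (nat \<Rightarrow> real)" where
  "stack n p = (\<lambda>i\<in>{..<2*n}. if i < n then fst p i else snd p (i - n))"

lemma measurable_stack: "stack n \<in> measurable (gauss n \<Otimes>\<^sub>M gauss n) (gauss (2*n))"
  unfolding stack_def gauss_def[of "2*n"]
proof (rule measurable_restrict)
  fix i assume i: "i \<in> {..<2*n}"
  have "(\<lambda>p. fst p i) \<in> measurable (gauss n \<Otimes>\<^sub>M gauss n) std_normal_measure" if "i < n"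
    using measurable_coord_gauss[OF that] by measurable
  moreover have "(\<lambda>p. snd p (i - n)) \<in> measurable (gauss n \<Otimes>\<^sub>M gauss n) std_normal_measure" if "\<not> i < n"
  proof -
    have "i - n < n" using that i by auto
    then show ?thesis using measurable_comp[OF measurable_snd measurable_coord_gauss] by (simp add: o_def)
  qed
  ultimately show "(\<lambda>p. if i < n then fst p i else snd p (i - n)) \<in> measurable (gauss n \<Otimes>\<^sub>M gauss n) std_normal_measure"
    by (cases "i < n") simp_all
qed

lemma prod_lessThan_double:
  fixes f :: "nat \<Rightarrow> 'a::comm_monoid_mult"
  shows "(\<Prod>i<2*n. f i) = (\<Prod>i<n. f i) * (\<Prod>i<n. f (i + n))"
proof -
  have "(\<Prod>i<2*n. f i) = (\<Prod>i<n. f i) * (\<Prod>i\<in>{n..<2*n}. f i)"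
    by (simp add: mult_2 prod.atLeastLessThan_concat[of 0 n "n + n", symmetric] lessThan_atLeast0)
  also have "(\<Prod>i\<in>{n..<2*n}. f i) = (\<Prod>i<n. f (i + n))"
    using prod.atLeastLessThan_shift_bounds[of f 0 n n] by (simp add: mult_2 o_def add.commute lessThan_atLeast0)
  finally show ?thesis .
qed

lemma sum_lessThan_double:
  fixes f :: "nat \<Rightarrow> 'a::comm_monoid_add"
  shows "(\<Sum>i<2*n. f i) = (\<Sum>i<n. f i) + (\<Sum>i<n. f (i + n))"
proof -
  have "(\<Sum>i<2*n. f i) = (\<Sum>i<n. f i) + (\<Sum>i\<in>{n..<2*n}. f i)"
    by (simp add: mult_2 sum.atLeastLessThan_concat[of 0 n "n + n", symmetric] lessThan_atLeast0)
  also have "(\<Sum>i\<in>{n..<2*n}. f i) = (\<Sum>i<n. f (i + n))"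
    using sum.atLeastLessThan_shift_bounds[of f 0 n n] by (simp add: mult_2 o_def add.commute lessThan_atLeast0)
  finally show ?thesis .
qed

lemma vimage_stack_PiE:
  "stack n -` Pi\<^sub>E {..<2*n} A \<inter> space (gauss n \<Otimes>\<^sub>M gauss n)
     = Pi\<^sub>E {..<n} A \<times> Pi\<^sub>E {..<n} (\<lambda>i. A (i + n))"
proof (intro set_eqI iffI)
  fix p assume p: "p \<in> stack n -` Pi\<^sub>E {..<2*n} A \<inter> space (gauss n \<Otimes>\<^sub>M gauss n)"
  have H: "\<forall>j<2*n. (if j < n then fst p j else snd p (j - n)) \<in> A j"
    using p by (auto simp: stack_def PiE_def Pi_def)
  have "fst p i \<in> A i" "snd p i \<in> A (i + n)" if "i < n" for i
    using H[rule_format, of i] H[rule_format, of "i + n"] that by auto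
  then show "p \<in> Pi\<^sub>E {..<n} A \<times> Pi\<^sub>E {..<n} (\<lambda>i. A (i + n))"
    using p by (cases p) (auto simp: space_pair_measure space_gauss PiE_def Pi_def)
next
  fix p assume p: "p \<in> Pi\<^sub>E {..<n} A \<times> Pi\<^sub>E {..<n} (\<lambda>i. A (i + n))"
  have "stack n p i \<in> A i" if "i < 2 * n" for i
  proof (cases "i < n")
    case False
    then have "i - n < n" "i - n + n = i" using that by auto
    then show ?thesis using p that False by (cases p) (auto simp: stack_def PiE_def Pi_def dest!: spec[of _ "i - n"])
  qed (use p that in \<open>auto simp: stack_def PiE_def Pi_def\<close>)
  then show "p \<in> stack n -` Pi\<^sub>E {..<2*n} A \<inter> space (gauss n \<Otimes>\<^sub>M gauss n)"
    using p by (cases p) (auto simp: stack_def space_pair_measure space_gauss PiE_def Pi_def)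
qed

lemma distr_stack: "distr (gauss n \<Otimes>\<^sub>M gauss n) (gauss (2*n)) (stack n) = gauss (2*n)"
proof -
  interpret ps: product_sigma_finite "\<lambda>_. std_normal_measure"
    by (simp add: product_sigma_finite.intro prob_space_imp_sigma_finite prob_space_normal_density)
  interpret sf: sigma_finite_measure "gauss n" by (rule sigma_finite_gauss)
  have "distr (gauss n \<Otimes>\<^sub>M gauss n) (gauss (2*n)) (stack n) = PiM {..<2*n} (\<lambda>_. std_normal_measure)"
  proof (rule ps.PiM_eqI)
    fix A assume A: "\<And>i. i \<in> {..<2*n} \<Longrightarrow> A i \<in> sets std_normal_measure"
    have A1: "Pi\<^sub>E {..<n} A \<in> sets (gauss n)" and A2: "Pi\<^sub>E {..<n} (\<lambda>i. A (i + n)) \<in> sets (gauss n)"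
      and A3: "Pi\<^sub>E {..<2*n} A \<in> sets (gauss (2*n))"
      using A by (auto simp: gauss_def intro!: sets_PiM_I_finite)
    have "emeasure (distr (gauss n \<Otimes>\<^sub>M gauss n) (gauss (2*n)) (stack n)) (Pi\<^sub>E {..<2*n} A)
        = emeasure (gauss n) (Pi\<^sub>E {..<n} A) * emeasure (gauss n) (Pi\<^sub>E {..<n} (\<lambda>i. A (i + n)))"
      using A1 A2 A3 measurable_stack
      by (simp add: emeasure_distr vimage_stack_PiE sf.emeasure_pair_measure_Times)
    also have "\<dots> = (\<Prod>i<2*n. emeasure std_normal_measure (A i))"
      using A unfolding gauss_def prod_lessThan_double by (subst (1 2) ps.emeasure_PiM) auto
    finally show "emeasure (distr (gauss n \<Otimes>\<^sub>M gauss n) (gauss (2*n)) (stack n)) (Pi\<^sub>E {..<2*n} A)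
      = (\<Prod>i<2*n. emeasure std_normal_measure (A i))" .
  qed (simp_all add: gauss_def)
  then show ?thesis by (simp add: gauss_def)
qed

definition antidiag :: "nat \<Rightarrow> (nat \<Rightarrow> real) \<Rightarrow> (nat \<Rightarrow> real)" where
  "antidiag n u = (\<lambda>i\<in>{..<2*n}. if i < n then u i / sqrt 2 else - u (i - n) / sqrt 2)"

lemma ip_antidiag_stack: "ip (2*n) (antidiag n u) (stack n (a, b)) = (ip n u a - ip n u b) / sqrt 2"
  unfolding ip_def
  by (subst sum_lessThan_double)
     (simp add: antidiag_def stack_def sum_subtractf sum_divide_distrib[symmetric] diff_divide_distrib sum_negf)

lemma ip_antidiag: "ip (2*n) (antidiag n u) (antidiag n v) = ip n u v"
  unfolding ip_def by (subst sum_lessThan_double) (simp add: antidiag_def sum.distrib[symmetric])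

lemma inj_on_antidiag: "inj_on (antidiag n) (space (gauss n))"
proof (rule inj_onI)
  fix u v assume uv: "u \<in> space (gauss n)" "v \<in> space (gauss n)" and eq: "antidiag n u = antidiag n v"
  show "u = v"
  proof
    fix k
    show "u k = v k"
      using fun_cong[OF eq, of k] uv by (cases "k < n") (auto simp: antidiag_def space_gauss PiE_def extensional_def)
  qed
qed

lemma orthonormal_antidiag:
  assumes "orthonormal n U"
  shows "orthonormal (2*n) (antidiag n ` U)"
proof -
  have "antidiag n u \<in> space (gauss (2*n))" for u
    by (simp add: antidiag_def)
  then show ?thesis
    using assms unfolding orthonormal_def by (auto simp: ip_antidiag)
qed

definition resample :: "nat \<Rightarrow> (nat \<Rightarrow> real) set \<Rightarrow> (nat \<Rightarrow> real) \<Rightarrow> (nat \<Rightarrow> real) \<Rightarrow> (nat \<Rightarrow> real)" where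
  "resample n U z x = (\<lambda>k\<in>{..<n}. z k - (\<Sum>u\<in>U. ip n u z * u k) + (\<Sum>u\<in>U. ip n u x * u k))"

lemma resample_in_space [simp]: "resample n U z x \<in> space (gauss n)"
  by (simp add: resample_def)

lemma measurable_resample:
  "(\<lambda>p. resample n U (fst p) (snd p)) \<in> measurable (gauss n \<Otimes>\<^sub>M gauss n) (gauss n)"
proof -
  have [measurable]: "(\<lambda>w. w k) \<in> borel_measurable (gauss n)" if "k < n" for k
    using that by (rule borel_measurable_coord_gauss)
  have [measurable]: "ip n u \<in> borel_measurable (gauss n)" for u
    by (rule borel_measurable_ip_gauss)
  show ?thesis
    unfolding resample_def by (rule measurable_into_gauss) measurable
qed

lemma measurable_resample_snd:
  "z \<in> space (gauss n) \<Longrightarrow> resample n U z \<in> measurable (gauss n) (gauss n)"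
  using measurable_comp[OF measurable_Pair1'[of z "gauss n" "gauss n"] measurable_resample[of n U]]
  by (simp add: o_def)

text \<open>With \<open>(z, x)\<close> stacked into \<open>\<real>\<^sup>2\<^sup>n\<close>, resampling is the product of the reflections in the
  orthonormal vectors \<open>(u, -u) / \<surd>2\<close> (which swap the \<open>span U\<close>-components of \<open>z\<close> and \<open>x\<close>),
  followed by projection onto the first factor.\<close>

lemma resample_eq_reflect_stack:
  assumes "orthonormal n U"
  shows "resample n U z x = restrict (reflect_orthonormal (2*n) (antidiag n ` U) (stack n (z, x))) {..<n}"
proof
  fix k
  have inj: "inj_on (antidiag n) U"
    using assms inj_on_subset[OF inj_on_antidiag] by (auto simp: orthonormal_def)
  have summand: "ip (2*n) (antidiag n u) (stack n (z, x)) * antidiag n u k = (ip n u z - ip n u x) * u k / 2"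
    if "k < n" for u
  proof -
    have "ip (2*n) (antidiag n u) (stack n (z, x)) * antidiag n u k
        = (ip n u z - ip n u x) * u k / (sqrt 2 * sqrt 2)"
      using that by (simp only: ip_antidiag_stack) (simp add: antidiag_def)
    then show ?thesis by simp
  qed
  show "resample n U z x k = restrict (reflect_orthonormal (2*n) (antidiag n ` U) (stack n (z, x))) {..<n} k"
  proof (cases "k < n")
    case True
    have "stack n (z, x) k = z k" using True by (simp add: stack_def)
    then have "reflect_orthonormal (2*n) (antidiag n ` U) (stack n (z, x)) k
        = z k - 2 * (\<Sum>u\<in>U. ip (2*n) (antidiag n u) (stack n (z, x)) * antidiag n u k)"
      using True by (simp add: reflect_orthonormal_def sum.reindex[OF inj])
    also have "\<dots> = z k - 2 * (\<Sum>u\<in>U. (ip n u z - ip n u x) * u k / 2)"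
      using True by (simp add: summand)
    also have "\<dots> = resample n U z x k"
      using True by (simp add: resample_def sum_divide_distrib[symmetric] left_diff_distrib sum_subtractf
          diff_divide_distrib)
    finally show ?thesis using True by simp
  qed (simp add: resample_def)
qed

theorem distr_resample:
  assumes "orthonormal n U"
  shows "distr (gauss n \<Otimes>\<^sub>M gauss n) (gauss n) (\<lambda>p. resample n U (fst p) (snd p)) = gauss n"
proof -
  interpret prob_space "gauss n" by (rule prob_space_gauss)
  interpret sigma_finite_measure "gauss n" by (rule sigma_finite_gauss)
  let ?P = "gauss n \<Otimes>\<^sub>M gauss n"
  let ?R = "reflect_orthonormal (2*n) (antidiag n ` U)"
  let ?take = "\<lambda>w. restrict w {..<n}"
  have R: "?R \<in> measurable (gauss (2*n)) (gauss (2*n))" "distr (gauss (2*n)) (gauss (2*n)) ?R = gauss (2*n)"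
    using preserves_gauss_reflect_orthonormal[OF orthonormal_antidiag[OF assms]]
    unfolding preserves_measure_def by auto
  have take: "?take \<in> measurable (gauss (2*n)) (gauss n)"
    by (intro measurable_into_gauss borel_measurable_coord_gauss) simp
  have "distr ?P (gauss n) (\<lambda>p. resample n U (fst p) (snd p)) = distr ?P (gauss n) (?take \<circ> ?R \<circ> stack n)"
    using assms by (intro distr_cong) (auto simp: resample_eq_reflect_stack)
  also have "\<dots> = distr (distr (distr ?P (gauss (2*n)) (stack n)) (gauss (2*n)) ?R) (gauss n) ?take"
    using take R(1) measurable_stack by (simp add: distr_distr comp_assoc)
  also have "\<dots> = distr (distr ?P (gauss (2*n)) (stack n)) (gauss n) ?take"
    by (simp add: distr_stack R(2))
  also have "\<dots> = distr ?P (gauss n) fst"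
    using take measurable_stack
    by (auto simp: distr_distr space_pair_measure space_gauss stack_def PiE_def extensional_def fun_eq_iff
        intro!: distr_cong)
  also have "\<dots> = gauss n" by (rule distr_pair_fst)
  finally show ?thesis .
qed

lemma nn_integral_emeasure_resample:
  assumes U: "orthonormal n U" and B: "B \<in> sets (gauss n)"
  shows "(\<integral>\<^sup>+z. emeasure (gauss n) {x\<in>space (gauss n). resample n U z x \<in> B} \<partial>gauss n) = emeasure (gauss n) B"
proof -
  interpret sigma_finite_measure "gauss n" by (rule sigma_finite_gauss)
  define Q where "Q = (\<lambda>p. resample n U (fst p) (snd p)) -` B \<inter> space (gauss n \<Otimes>\<^sub>M gauss n)"
  have Q: "Q \<in> sets (gauss n \<Otimes>\<^sub>M gauss n)"
    unfolding Q_def using measurable_sets[OF measurable_resample B] .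
  have slice: "Pair z -` Q = {x\<in>space (gauss n). resample n U z x \<in> B}" if "z \<in> space (gauss n)" for z
    using that by (auto simp: Q_def space_pair_measure)
  have "emeasure (gauss n) B = emeasure (gauss n \<Otimes>\<^sub>M gauss n) Q"
    using B measurable_resample by (subst distr_resample[OF U, symmetric]) (simp add: emeasure_distr Q_def)
  also have "\<dots> = (\<integral>\<^sup>+z. emeasure (gauss n) (Pair z -` Q) \<partial>gauss n)"
    using Q by (rule emeasure_pair_measure_alt)
  finally show ?thesis
    by (simp add: slice cong: nn_integral_cong)
qed

lemma borel_measurable_emeasure_resample:
  assumes B: "B \<in> sets (gauss n)"
  shows "(\<lambda>z. emeasure (gauss n) {x\<in>space (gauss n). resample n U z x \<in> B}) \<in> borel_measurable (gauss n)"
proof -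
  interpret sigma_finite_measure "gauss n" by (rule sigma_finite_gauss)
  define Q where "Q = (\<lambda>p. resample n U (fst p) (snd p)) -` B \<inter> space (gauss n \<Otimes>\<^sub>M gauss n)"
  have "Q \<in> sets (gauss n \<Otimes>\<^sub>M gauss n)"
    unfolding Q_def using measurable_sets[OF measurable_resample B] .
  then have "(\<lambda>z. emeasure (gauss n) (Pair z -` Q)) \<in> borel_measurable (gauss n)"
    by (rule measurable_emeasure_Pair)
  moreover have "Pair z -` Q = {x\<in>space (gauss n). resample n U z x \<in> B}" if "z \<in> space (gauss n)" for z
    using that by (auto simp: Q_def space_pair_measure)
  ultimately show ?thesis by (simp cong: measurable_cong)
qed

lemma ip_resample:
  assumes "orthonormal n U" "u \<in> U"
  shows "ip n u (resample n U z x) = ip n u x"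
proof -
  have proj: "(\<Sum>i<n. \<Sum>v\<in>U. ip n v w * (u i * v i)) = (\<Sum>v\<in>U. ip n v w * ip n u v)" for w
    unfolding ip_def by (subst sum.swap) (simp add: sum_distrib_left)
  have "ip n u (resample n U z x)
      = ip n u z - (\<Sum>v\<in>U. ip n v z * ip n u v) + (\<Sum>v\<in>U. ip n v x * ip n u v)"
    unfolding proj[symmetric] unfolding ip_def resample_def
    by (simp add: algebra_simps sum_distrib_left sum.distrib sum_subtractf)
  then show ?thesis
    using ip_sum_orthonormal[OF assms] by simp
qed

lemma sum_sq_orthonormal_proj_le:
  assumes U: "orthonormal n U"
  shows "(\<Sum>k<n. (\<Sum>u\<in>U. ip n u d * u k)\<^sup>2) \<le> (\<Sum>k<n. (d k)\<^sup>2)"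
proof -
  define c where "c u = ip n u d" for u
  define p where "p k = (\<Sum>u\<in>U. c u * u k)" for k
  have ip_U: "ip n u w = (if u = w then 1 else 0)" if "u \<in> U" "w \<in> U" for u w
    using U that by (auto simp: orthonormal_def)
  have pp: "(\<Sum>k<n. (p k)\<^sup>2) = (\<Sum>u\<in>U. (c u)\<^sup>2)"
  proof -
    have "(\<Sum>k<n. (p k)\<^sup>2) = (\<Sum>k<n. \<Sum>u\<in>U. \<Sum>w\<in>U. c u * c w * (u k * w k))"
      unfolding p_def power2_eq_square by (simp add: sum_product algebra_simps)
    also have "\<dots> = (\<Sum>u\<in>U. \<Sum>w\<in>U. c u * c w * ip n u w)"
      unfolding ip_def by (simp add: sum.swap[of _ "{..<n}"] sum_distrib_left)
    also have "\<dots> = (\<Sum>u\<in>U. \<Sum>w\<in>U. if u = w then c u * c w else 0)"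
      by (intro sum.cong refl) (simp add: ip_U)
    also have "\<dots> = (\<Sum>u\<in>U. (c u)\<^sup>2)"
      using U by (simp add: orthonormal_def power2_eq_square)
    finally show ?thesis .
  qed
  have dp: "(\<Sum>k<n. d k * p k) = (\<Sum>u\<in>U. (c u)\<^sup>2)"
  proof -
    have "(\<Sum>k<n. d k * p k) = (\<Sum>k<n. \<Sum>u\<in>U. c u * (u k * d k))"
      unfolding p_def by (simp add: sum_distrib_left algebra_simps)
    also have "\<dots> = (\<Sum>u\<in>U. c u * ip n u d)"
      unfolding ip_def by (simp add: sum.swap[of _ "{..<n}"] sum_distrib_left)
    finally show ?thesis by (simp add: c_def power2_eq_square)
  qed
  have "0 \<le> (\<Sum>k<n. (d k - p k)\<^sup>2)" by (simp add: sum_nonneg)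
  also have "\<dots> = (\<Sum>k<n. (d k)\<^sup>2) - 2 * (\<Sum>k<n. d k * p k) + (\<Sum>k<n. (p k)\<^sup>2)"
    by (simp add: power2_diff sum.distrib sum_subtractf sum_distrib_left algebra_simps)
  finally show ?thesis using pp dp by (simp add: p_def c_def)
qed

lemma edist_resample_le:
  assumes "orthonormal n U"
  shows "edist n (resample n U z x) (resample n U z y) \<le> edist n x y"
proof -
  define d where "d i = x i - y i" for i
  have ip_d: "ip n u x - ip n u y = ip n u d" for u
    unfolding ip_def d_def by (simp add: sum_subtractf algebra_simps)
  have "resample n U z x k - resample n U z y k = (\<Sum>u\<in>U. ip n u d * u k)" if "k < n" for k
    using that by (simp add: resample_def sum_subtractf[symmetric] left_diff_distrib[symmetric] ip_d)
  then have "(\<Sum>k<n. (resample n U z x k - resample n U z y k)\<^sup>2) = (\<Sum>k<n. (\<Sum>u\<in>U. ip n u d * u k)\<^sup>2)"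
    by simp
  also have "\<dots> \<le> (\<Sum>k<n. (d k)\<^sup>2)" by (rule sum_sq_orthonormal_proj_le[OF assms])
  finally show ?thesis unfolding edist_def d_def by simp
qed

lemma linear_junta_resample:
  assumes "orthonormal n U" "card U \<le> k"
  shows "linear_junta n k (\<lambda>x. h (resample n U z x))"
proof -
  define G where "G c = h (\<lambda>i\<in>{..<n}. z i - (\<Sum>u\<in>U. ip n u z * u i) + (\<Sum>u\<in>U. c u * u i))" for c
  have "resample n U z x = (\<lambda>i\<in>{..<n}. z i - (\<Sum>u\<in>U. ip n u z * u i) + (\<Sum>u\<in>U. (\<lambda>u\<in>U. ip n u x) u * u i))" for x
    unfolding resample_def by (intro restrict_ext) (simp cong: sum.cong)
  then have "\<forall>x\<in>space (gauss n). h (resample n U z x) = G (\<lambda>u\<in>U. ip n u x)"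
    unfolding G_def by simp
  then show ?thesis
    using assms unfolding linear_junta_def orthonormal_def by (intro exI[of _ U] exI[of _ G]) simp
qed

lemma resample_junta_invariant:
  assumes "orthonormal n U" and g: "\<And>x. x \<in> space (gauss n) \<Longrightarrow> g x = G (\<lambda>u\<in>U. ip n u x)"
    and x: "x \<in> space (gauss n)"
  shows "g (resample n U z x) = g x"
proof -
  have "(\<lambda>u\<in>U. ip n u (resample n U z x)) = (\<lambda>u\<in>U. ip n u x)"
    using ip_resample[OF assms(1)] by (intro restrict_ext) simp
  then show ?thesis using g x by simp
qed

section \<open>Distance and neighbourhoods\<close>

lemma edist_eq_L2_set: "edist n x y = L2_set (\<lambda>i. x i - y i) {..<n}"
  unfolding edist_def L2_set_def ..

lemma edist_triangle: "edist n x z \<le> edist n x y + edist n y z"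
  using L2_set_triangle_ineq[of "\<lambda>i. x i - y i" "\<lambda>i. y i - z i" "{..<n}"]
  by (simp add: edist_eq_L2_set)

lemma edist_commute: "edist n x y = edist n y x"
  unfolding edist_def by (simp add: power2_commute)

lemma edist_nonneg: "0 \<le> edist n x y"
  unfolding edist_def by (simp add: sum_nonneg)

lemma borel_measurable_edist: "(\<lambda>x. edist n x q) \<in> borel_measurable (gauss n)"
proof -
  have "(\<lambda>x. \<Sum>i<n. (x i - q i)\<^sup>2) \<in> borel_measurable (gauss n)"
    by (intro borel_measurable_sum borel_measurable_power borel_measurable_diff
        borel_measurable_coord_gauss borel_measurable_const) auto
  then show ?thesis unfolding edist_def by measurable
qed

definition rational_points :: "nat \<Rightarrow> (nat \<Rightarrow> real) set" where
  "rational_points n = PiE {..<n} (\<lambda>_. \<rat>)"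

lemma countable_rational_points: "countable (rational_points n)"
  unfolding rational_points_def by (intro countable_PiE countable_rat) auto

lemma rational_points_dense:
  assumes "\<eta> > 0"
  shows "\<exists>q\<in>rational_points n. edist n x q < \<eta>"
proof -
  define \<eta>' where "\<eta>' = \<eta> / (real n + 1)"
  have \<eta>': "\<eta>' > 0" using assms by (simp add: \<eta>'_def)
  have "\<forall>i. \<exists>r\<in>\<rat>. x i - \<eta>' < r \<and> r < x i + \<eta>'"
    using \<eta>' by (intro allI Rats_dense_in_real) simp
  then have "\<exists>r. \<forall>i. r i \<in> \<rat> \<and> x i - \<eta>' < r i \<and> r i < x i + \<eta>'"
    by (intro choice) blast
  then obtain r where r: "\<forall>i. r i \<in> \<rat> \<and> x i - \<eta>' < r i \<and> r i < x i + \<eta>'"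
    by blast
  have r_close: "\<bar>x i - r i\<bar> \<le> \<eta>'" for i
    using r[rule_format, of i] by (simp add: abs_le_iff)
  define q where "q = restrict r {..<n}"
  have "edist n x q \<le> (\<Sum>i<n. \<bar>x i - q i\<bar>)"
    unfolding edist_eq_L2_set by (rule L2_set_le_sum_abs)
  also have "\<dots> \<le> (\<Sum>i<n. \<eta>')"
    using r_close by (intro sum_mono) (simp add: q_def)
  also have "\<dots> = real n * \<eta>'" by simp
  also have "\<dots> < \<eta>" using assms by (simp add: \<eta>'_def field_simps)
  finally have "edist n x q < \<eta>" .
  moreover have "q \<in> rational_points n"
    using r by (simp add: q_def rational_points_def)
  ultimately show ?thesis by blast
qed

lemma INF_edist_le_iff:
  assumes A: "A \<noteq> {}"
  shows "(INF a\<in>A. edist n x a) \<le> \<delta> \<longleftrightarrow>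
    (\<forall>m::nat. \<exists>q\<in>rational_points n. edist n x q < 1 / (real m + 1) \<and>
       (\<exists>a\<in>A. edist n q a < \<delta> + 2 / (real m + 1)))"
    (is "?inf \<le> \<delta> \<longleftrightarrow> ?approx")
proof
  have bdd: "bdd_below ((\<lambda>a. edist n x a) ` A)"
    by (intro bdd_belowI[of _ 0]) (auto simp: edist_nonneg)
  assume le: "?inf \<le> \<delta>"
  show ?approx
  proof
    fix m :: nat
    have pos: "1 / (real m + 1) > 0" by simp
    then have "?inf < \<delta> + 1 / (real m + 1)" using le by linarith
    then obtain a where a: "a \<in> A" "edist n x a < \<delta> + 1 / (real m + 1)"
      using cINF_less_iff[OF A bdd] by blast
    obtain q where q: "q \<in> rational_points n" "edist n x q < 1 / (real m + 1)"
      using rational_points_dense[OF pos] by blast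
    have "edist n q a \<le> edist n q x + edist n x a" by (rule edist_triangle)
    also have "\<dots> < \<delta> + 2 / (real m + 1)" using a q by (simp add: edist_commute)
    finally show "\<exists>q\<in>rational_points n. edist n x q < 1 / (real m + 1) \<and>
        (\<exists>a\<in>A. edist n q a < \<delta> + 2 / (real m + 1))"
      using q a by blast
  qed
next
  have bdd: "bdd_below ((\<lambda>a. edist n x a) ` A)"
    by (intro bdd_belowI[of _ 0]) (auto simp: edist_nonneg)
  assume approx: ?approx
  have bound: "?inf < \<delta> + 3 / (real m + 1)" for m :: nat
  proof -
    obtain q a where qa: "edist n x q < 1 / (real m + 1)" "a \<in> A" "edist n q a < \<delta> + 2 / (real m + 1)"
      using approx by blast
    have "?inf \<le> edist n x a" by (rule cINF_lower[OF bdd qa(2)])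
    also have "\<dots> \<le> edist n x q + edist n q a" by (rule edist_triangle)
    also have "\<dots> < \<delta> + 3 / (real m + 1)" using qa by simp
    finally show ?thesis .
  qed
  show "?inf \<le> \<delta>"
  proof (rule field_le_epsilon)
    fix e :: real assume "e > 0"
    then obtain m :: nat where "inverse (real (Suc m)) < e / 3"
      using reals_Archimedean[of "e / 3"] by auto
    then have "3 / (real m + 1) < e" by (simp add: field_simps)
    then show "?inf \<le> \<delta> + e" using bound[of m] by linarith
  qed
qed

lemma sets_nbhd: "nbhd n A \<delta> \<in> sets (gauss n)"
proof (cases "A = {}")
  case True
  then show ?thesis by (simp add: nbhd_def)
next
  case False
  define S where "S m = {q\<in>rational_points n. \<exists>a\<in>A. edist n q a < \<delta> + 2 / (real m + 1)}" for m :: nat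
  have eq: "nbhd n A \<delta> = (\<Inter>m. \<Union>q\<in>S m. {x\<in>space (gauss n). edist n x q < 1 / (real m + 1)})"
    using False unfolding nbhd_def S_def by (force simp: INF_edist_le_iff[OF False])
  have "(\<Union>q\<in>S m. {x\<in>space (gauss n). edist n x q < 1 / (real m + 1)}) \<in> sets (gauss n)" for m
  proof (rule sets.countable_UN'')
    show "countable (S m)"
      unfolding S_def by (rule countable_subset[OF _ countable_rational_points]) auto
    show "{x\<in>space (gauss n). edist n x q < 1 / (real m + 1)} \<in> sets (gauss n)" for q
      using borel_measurable_edist[of n q] by measurable
  qed
  then show ?thesis unfolding eq by (intro sets.countable_INT) auto
qed

lemma nbhd_vimage_subset:
  fixes F :: "(nat \<Rightarrow> real) \<Rightarrow> (nat \<Rightarrow> real)" and A :: "(nat \<Rightarrow> real) set"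
  assumes F: "\<And>x. x \<in> space (gauss n) \<Longrightarrow> F x \<in> space (gauss n)"
    and lip: "\<And>x y. edist n (F x) (F y) \<le> edist n x y"
  defines "A' \<equiv> {x\<in>space (gauss n). F x \<in> A}"
  shows "nbhd n A' \<delta> - A' \<subseteq> {x\<in>space (gauss n). F x \<in> nbhd n A \<delta> - A}"
proof
  fix x assume x: "x \<in> nbhd n A' \<delta> - A'"
  then have xs: "x \<in> space (gauss n)" and ne: "A' \<noteq> {}" and le: "(INF a\<in>A'. edist n x a) \<le> \<delta>"
    by (auto simp: nbhd_def)
  have bdd: "bdd_below ((\<lambda>a. edist n (F x) a) ` A)"
    by (intro bdd_belowI[of _ 0]) (auto simp: edist_nonneg)
  have "(INF a\<in>A. edist n (F x) a) \<le> (INF a\<in>A'. edist n x a)"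
  proof (rule cINF_greatest[OF ne])
    fix a' assume "a' \<in> A'"
    then have "(INF a\<in>A. edist n (F x) a) \<le> edist n (F x) (F a')"
      by (intro cINF_lower[OF bdd]) (simp add: A'_def)
    also have "\<dots> \<le> edist n x a'" by (rule lip)
    finally show "(INF a\<in>A. edist n (F x) a) \<le> edist n x a'" .
  qed
  then show "x \<in> {x\<in>space (gauss n). F x \<in> nbhd n A \<delta> - A}"
    using x xs ne le F[OF xs] by (auto simp: nbhd_def A'_def)
qed

section \<open>Gaussian surface area\<close>

lemma gsurf_set_nonneg: "0 \<le> gsurf_set n A"
  unfolding gsurf_set_def
  by (rule Liminf_bounded) (use eventually_at_right_less[of "0::real"] in \<open>eventually_elim, simp\<close>)

lemma surf_const_one: "surf n (\<lambda>x. 1) = 0"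
proof -
  have "{x\<in>space (gauss n). (1::real) = 1} = space (gauss n)" by simp
  moreover have "nbhd n (space (gauss n)) \<delta> - space (gauss n) = {}" for \<delta>
    by (auto simp: nbhd_def)
  ultimately show ?thesis
    unfolding surf_def gsurf_set_def by (simp only:) (simp add: Liminf_const)
qed

lemma Liminf_at_right_le_obtain_seq:
  fixes r :: "real \<Rightarrow> real"
  assumes "Liminf (at_right 0) (\<lambda>\<delta>. ereal (r \<delta>)) \<le> ereal s"
  obtains d where "\<And>m. 0 < d m \<and> d m < 1 / (real m + 1) \<and> r (d m) < s + 1 / (real m + 1)"
proof -
  have "\<exists>\<delta>. 0 < \<delta> \<and> \<delta> < 1 / (real m + 1) \<and> r \<delta> < s + 1 / (real m + 1)" for m :: nat
  proof -
    have pos: "1 / (real m + 1) > 0" by simp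
    then have "\<not> ereal (s + 1 / (real m + 1)) \<le> Liminf (at_right 0) (\<lambda>\<delta>. ereal (r \<delta>))"
      using assms by (metis ereal_less_eq(3) less_add_same_cancel1 order.trans linorder_not_le)
    then obtain y where y: "y < ereal (s + 1 / (real m + 1))"
      and "\<not> eventually (\<lambda>\<delta>. y < ereal (r \<delta>)) (at_right 0)"
      unfolding le_Liminf_iff by auto
    then have "\<forall>b>0. \<exists>\<delta>>0. \<delta> < b \<and> \<not> y < ereal (r \<delta>)"
      unfolding eventually_at_right_field by auto
    then obtain \<delta> where "\<delta> > 0" "\<delta> < 1 / (real m + 1)" "\<not> y < ereal (r \<delta>)"
      using pos by blast
    moreover have "ereal (r \<delta>) < ereal (s + 1 / (real m + 1))"
      using y \<open>\<not> y < ereal (r \<delta>)\<close> by (meson not_less less_le_trans)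
    ultimately show ?thesis by auto
  qed
  then show ?thesis using that by metis
qed

lemma Liminf_at_right_le_of_seq:
  fixes f :: "real \<Rightarrow> real" and v d :: "nat \<Rightarrow> real"
  assumes d: "\<And>m. 0 < d m \<and> d m < 1 / (real m + 1)"
    and fv: "\<And>m. f (d m) \<le> v m"
    and lim: "liminf (\<lambda>m. ennreal (v m)) \<le> ennreal C" and C: "C \<ge> 0"
  shows "Liminf (at_right 0) (\<lambda>\<delta>. ereal (f \<delta>)) \<le> ereal C"
proof (rule ccontr)
  let ?L = "Liminf (at_right (0::real)) (\<lambda>\<delta>. ereal (f \<delta>))"
  assume "\<not> ?L \<le> ereal C"
  then have "ereal C < ?L" by simp
  then obtain y where y: "ereal C < ereal y" "ereal y < ?L"
    using ereal_dense2 by blast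
  have "eventually (\<lambda>\<delta>. ereal y < ereal (f \<delta>)) (at_right 0)"
    using y(2) le_Liminf_iff[of ?L "at_right 0" "\<lambda>\<delta>. ereal (f \<delta>)"] by auto
  then obtain b where b: "b > 0" "\<And>\<delta>. \<delta> > 0 \<Longrightarrow> \<delta> < b \<Longrightarrow> y < f \<delta>"
    unfolding eventually_at_right_field by auto
  define w where "w = (C + y) / 2"
  have w: "C < w" "w < y" using y(1) by (auto simp: w_def)
  have "\<not> eventually (\<lambda>m. ennreal w \<le> ennreal (v m)) sequentially"
  proof
    assume "eventually (\<lambda>m. ennreal w \<le> ennreal (v m)) sequentially"
    then have "ennreal w \<le> liminf (\<lambda>m. ennreal (v m))" by (rule Liminf_bounded)
    also have "\<dots> \<le> ennreal C" by (rule lim)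
    finally show False using w C by (simp add: ennreal_le_iff2)
  qed
  then have "\<forall>N. \<exists>m\<ge>N. ennreal (v m) < ennreal w"
    by (simp add: not_eventually not_le frequently_sequentially)
  moreover obtain N :: nat where N: "inverse (real (Suc N)) < b"
    using reals_Archimedean[OF b(1)] by blast
  ultimately obtain m where m: "m \<ge> N" "ennreal (v m) < ennreal w" by blast
  have "v m < w"
  proof (cases "v m \<ge> 0")
    case True
    then show ?thesis using m(2) by (meson ennreal_leI not_le)
  qed (use w C in simp)
  have "d m < 1 / (real m + 1)" using d by blast
  also have "\<dots> \<le> 1 / (real N + 1)" using m(1) by (simp add: frac_le)
  also have "\<dots> < b" using N by (simp add: inverse_eq_divide add.commute)
  finally have "y < f (d m)" using b(2) d by blast
  then show False using fv[of m] \<open>v m < w\<close> w by simp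
qed

lemma surf_resample_le:
  assumes U: "orthonormal n U" and z: "z \<in> space (gauss n)"
    and h: "h \<in> borel_measurable (gauss n)"
    and d: "\<And>m. 0 < d m \<and> d m < 1 / (real m + 1)"
    and lim: "liminf (\<lambda>m. ennreal (measure (gauss n)
        {x\<in>space (gauss n). resample n U z x \<in> nbhd n {y\<in>space (gauss n). h y = 1} (d m) - {y\<in>space (gauss n). h y = 1}}
        / d m)) \<le> ennreal c"
    and c: "c \<ge> 0"
  shows "surf n (\<lambda>x. h (resample n U z x)) \<le> ereal c"
proof -
  interpret prob_space "gauss n" by (rule prob_space_gauss)
  define A where "A = {y\<in>space (gauss n). h y = 1}"
  define A' where "A' = {x\<in>space (gauss n). resample n U z x \<in> A}"
  have A: "A \<in> sets (gauss n)" unfolding A_def using h by measurable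
  have "measure (gauss n) (nbhd n A' \<delta> - A') \<le> measure (gauss n) {x\<in>space (gauss n). resample n U z x \<in> nbhd n A \<delta> - A}"
    for \<delta>
  proof (rule finite_measure_mono)
    show "nbhd n A' \<delta> - A' \<subseteq> {x\<in>space (gauss n). resample n U z x \<in> nbhd n A \<delta> - A}"
      unfolding A'_def by (rule nbhd_vimage_subset) (simp_all add: edist_resample_le[OF U])
    show "{x\<in>space (gauss n). resample n U z x \<in> nbhd n A \<delta> - A} \<in> sets (gauss n)"
      using measurable_sets[OF measurable_resample_snd[OF z] sets.Diff[OF sets_nbhd A]]
      by (simp add: Int_def conj_commute)
  qed
  then have "Liminf (at_right 0) (\<lambda>\<delta>. ereal (measure (gauss n) (nbhd n A' \<delta> - A') / \<delta>)) \<le> ereal c"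
    using d lim c unfolding A_def
    by (intro Liminf_at_right_le_of_seq[where d = d]) (auto intro: divide_right_mono less_imp_le)
  moreover have "{x\<in>space (gauss n). h (resample n U z x) = 1} = A'"
    by (auto simp: A'_def A_def)
  ultimately show ?thesis unfolding surf_def gsurf_set_def by simp
qed

section \<open>Choosing a good restriction\<close>

lemma nn_integral_liminf_resample_le:
  assumes U: "orthonormal n U" and B: "\<And>m. B m \<in> sets (gauss n)"
    and d: "\<And>m. d m > 0"
    and bound: "\<And>m. measure (gauss n) (B m) / d m < s + 1 / (real m + 1)"
  shows "(\<integral>\<^sup>+z. liminf (\<lambda>m. ennreal (measure (gauss n) {x\<in>space (gauss n). resample n U z x \<in> B m} / d m))
      \<partial>gauss n) \<le> ennreal s"
proof -
  interpret prob_space "gauss n" by (rule prob_space_gauss)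
  define u where "u m z = ennreal (measure (gauss n) {x\<in>space (gauss n). resample n U z x \<in> B m} / d m)" for m z
  have u_eq: "u m z = ennreal (1 / d m) * emeasure (gauss n) {x\<in>space (gauss n). resample n U z x \<in> B m}" for m z
    using d[of m] by (simp add: u_def emeasure_eq_measure ennreal_mult'[symmetric] mult.commute)
  have u_meas: "u m \<in> borel_measurable (gauss n)" for m
    unfolding u_eq using borel_measurable_emeasure_resample[OF B] by measurable
  have "(\<integral>\<^sup>+z. u m z \<partial>gauss n) = ennreal (1 / d m) * emeasure (gauss n) (B m)" for m
    unfolding u_eq using borel_measurable_emeasure_resample[OF B]
    by (simp add: nn_integral_cmult nn_integral_emeasure_resample[OF U B])
  also have "\<dots> m = ennreal (measure (gauss n) (B m) / d m)" for m
    using d[of m] by (simp add: emeasure_eq_measure ennreal_mult'[symmetric])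
  finally have int_u: "(\<integral>\<^sup>+z. u m z \<partial>gauss n) \<le> ennreal (s + 1 / (real m + 1))" for m
    using bound[of m] by (simp add: ennreal_leI less_imp_le)
  have "(\<integral>\<^sup>+z. liminf (\<lambda>m. u m z) \<partial>gauss n) \<le> liminf (\<lambda>m. \<integral>\<^sup>+z. u m z \<partial>gauss n)"
    using u_meas by (rule nn_integral_liminf)
  also have "\<dots> \<le> liminf (\<lambda>m. ennreal (s + 1 / (real m + 1)))"
    using int_u by (intro Liminf_mono) simp
  also have "\<dots> = ennreal s"
  proof (rule lim_imp_Liminf)
    have "(\<lambda>m. s + 1 / (real m + 1)) \<longlonglongrightarrow> s + 0"
      using LIMSEQ_inverse_real_of_nat by (intro tendsto_add tendsto_const) (simp add: inverse_eq_divide add.commute)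
    then show "(\<lambda>m. ennreal (s + 1 / (real m + 1))) \<longlonglongrightarrow> ennreal s"
      by (intro tendsto_ennrealI) simp
  qed simp
  finally show ?thesis unfolding u_def .
qed

text \<open>Markov's inequality for two integrands at once: pointwise, \<open>a b \<le> b F + a D\<close> wherever
  \<open>F > a\<close> or \<open>D > b\<close>.\<close>

lemma exists_point_le_of_weighted_nn_integrals:
  fixes M :: "'a measure" and F D :: "'a \<Rightarrow> ennreal"
  assumes "prob_space M" and F: "F \<in> borel_measurable M" and D: "D \<in> borel_measurable M"
    and ab: "a \<ge> 0" "b \<ge> 0"
    and int: "ennreal b * (\<integral>\<^sup>+z. F z \<partial>M) + ennreal a * (\<integral>\<^sup>+z. D z \<partial>M) < ennreal (a * b)"
  shows "\<exists>z\<in>space M. F z \<le> ennreal a \<and> D z \<le> ennreal b"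
proof (rule ccontr)
  interpret prob_space M by fact
  assume "\<not> ?thesis"
  then have H: "\<And>z. z \<in> space M \<Longrightarrow> ennreal a < F z \<or> ennreal b < D z"
    by (auto simp: not_le)
  have pw: "ennreal (a * b) \<le> ennreal b * F z + ennreal a * D z" if z: "z \<in> space M" for z
  proof (cases "ennreal a < F z")
    case True
    have "ennreal (a * b) = ennreal b * ennreal a"
      using ab by (simp add: ennreal_mult mult.commute)
    also have "\<dots> \<le> ennreal b * F z"
      using True by (intro mult_left_mono) auto
    finally show ?thesis by (simp add: add_increasing2)
  next
    case False
    then have "ennreal b < D z" using H[OF z] by simp
    have "ennreal (a * b) = ennreal a * ennreal b"
      using ab by (simp add: ennreal_mult)
    also have "\<dots> \<le> ennreal a * D z"
      using \<open>ennreal b < D z\<close> by (intro mult_left_mono) auto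
    finally show ?thesis by (simp add: add_increasing)
  qed
  have "ennreal (a * b) = (\<integral>\<^sup>+z. ennreal (a * b) \<partial>M)" by (simp add: emeasure_space_1)
  also have "\<dots> \<le> (\<integral>\<^sup>+z. ennreal b * F z + ennreal a * D z \<partial>M)"
    using pw by (intro nn_integral_mono) auto
  also have "\<dots> = ennreal b * (\<integral>\<^sup>+z. F z \<partial>M) + ennreal a * (\<integral>\<^sup>+z. D z \<partial>M)"
    using F D by (simp add: nn_integral_add nn_integral_cmult)
  finally show False using int leD by blast
qed

lemma exists_point_integrals_small:
  fixes M :: "'a measure" and F D :: "'a \<Rightarrow> ennreal"
  assumes M: "prob_space M" and F: "F \<in> borel_measurable M" and D: "D \<in> borel_measurable M"
    and int_F: "(\<integral>\<^sup>+z. F z \<partial>M) \<le> ennreal s" and int_D: "(\<integral>\<^sup>+z. D z \<partial>M) \<le> ennreal (2 * \<epsilon>)"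
    and s: "s \<ge> 0" and \<epsilon>: "0 < \<epsilon>" "\<epsilon> \<le> 1"
  shows "\<exists>z\<in>space M. F z \<le> ennreal (s * (1 + sqrt \<epsilon>)) \<and> D z \<le> ennreal (5 * sqrt \<epsilon>)"
proof -
  interpret prob_space M by fact
  define t where "t = sqrt \<epsilon>"
  have t: "0 < t" "t \<le> 1" "t * t = \<epsilon>" using \<epsilon> by (auto simp: t_def)
  show ?thesis
  proof (cases "s = 0")
    case True
    have "AE z in M. F z = 0"
      using int_F F True by (simp add: nn_integral_0_iff_AE)
    show ?thesis
    proof (rule ccontr)
      assume contra: "\<not> ?thesis"
      from \<open>AE z in M. F z = 0\<close> AE_space have "AE z in M. ennreal (5 * t) \<le> D z"
      proof eventually_elim
        case (elim z)
        then show ?case using contra by (auto simp: True t_def not_le intro: less_imp_le)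
      qed
      then have "(\<integral>\<^sup>+z. ennreal (5 * t) \<partial>M) \<le> (\<integral>\<^sup>+z. D z \<partial>M)"
        by (rule nn_integral_mono_AE)
      also note int_D
      finally have "5 * t \<le> 2 * t * t"
        using t \<epsilon> by (simp add: emeasure_space_1 mult.assoc)
      then show False using t by (simp add: mult_le_cancel_right)
    qed
  next
    case False
    let ?a = "s * (1 + t)" and ?b = "5 * t"
    have "?b * s + ?a * (2 * \<epsilon>) < ?a * ?b"
    proof -
      have "(2 * (1 + t)) * (s * t * t) < 5 * (s * t * t)"
        using False s t by (intro mult_strict_right_mono) auto
      then show ?thesis unfolding t(3)[symmetric] by (simp add: algebra_simps)
    qed
    have "ennreal ?b * (\<integral>\<^sup>+z. F z \<partial>M) + ennreal ?a * (\<integral>\<^sup>+z. D z \<partial>M)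
        \<le> ennreal ?b * ennreal s + ennreal ?a * ennreal (2 * \<epsilon>)"
      using int_F int_D by (intro add_mono mult_left_mono) auto
    also have "\<dots> = ennreal (?b * s + ?a * (2 * \<epsilon>))"
      using s t \<epsilon> by (simp add: ennreal_mult)
    also have "\<dots> < ennreal (?a * ?b)"
      using \<open>?b * s + ?a * (2 * \<epsilon>) < ?a * ?b\<close> s t \<epsilon> by (simp add: ennreal_less_iff del: ennreal_plus)
    finally have "ennreal ?b * (\<integral>\<^sup>+z. F z \<partial>M) + ennreal ?a * (\<integral>\<^sup>+z. D z \<partial>M) < ennreal (?a * ?b)" .
    then show ?thesis
      using exists_point_le_of_weighted_nn_integrals[OF M F D] s t unfolding t_def by simp
  qed
qed

lemma eps_close_sym: "eps_close n \<epsilon> f g \<Longrightarrow> eps_close n \<epsilon> g f"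
proof -
  have "{x\<in>space (gauss n). g x \<noteq> f x} = {x\<in>space (gauss n). f x \<noteq> g x}" by auto
  then show "eps_close n \<epsilon> f g \<Longrightarrow> eps_close n \<epsilon> g f" unfolding eps_close_def by simp
qed

lemma eps_close_trans:
  assumes f: "f \<in> borel_measurable (gauss n)" and g: "g \<in> borel_measurable (gauss n)"
    and h: "h \<in> borel_measurable (gauss n)"
    and hg: "eps_close n \<beta> h g" and gf: "eps_close n \<epsilon> g f"
  shows "eps_close n (\<beta> + \<epsilon>) h f"
proof -
  interpret prob_space "gauss n" by (rule prob_space_gauss)
  let ?S = "{x\<in>space (gauss n). h x \<noteq> g x}" and ?T = "{x\<in>space (gauss n). g x \<noteq> f x}"
  have S: "?S \<in> sets (gauss n)" and T: "?T \<in> sets (gauss n)"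
    using h g f by (blast intro: borel_measurable_neq)+
  then have "measure (gauss n) {x\<in>space (gauss n). h x \<noteq> f x} \<le> measure (gauss n) (?S \<union> ?T)"
    by (intro finite_measure_mono) auto
  also have "\<dots> \<le> measure (gauss n) ?S + measure (gauss n) ?T"
    using S T by (rule measure_Un_le)
  also have "\<dots> \<le> \<beta> + \<epsilon>"
    using hg gf unfolding eps_close_def by simp
  finally show ?thesis unfolding eps_close_def .
qed

lemma eps_close_resample:
  assumes U: "orthonormal n U" and z: "z \<in> space (gauss n)"
    and g: "\<And>x. x \<in> space (gauss n) \<Longrightarrow> g x = G (\<lambda>u\<in>U. ip n u x)"
    and hg: "measure (gauss n) {x\<in>space (gauss n). h (resample n U z x) \<noteq> g (resample n U z x)} \<le> \<beta>"
  shows "eps_close n \<beta> (\<lambda>x. h (resample n U z x)) g"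
proof -
  have "g (resample n U z x) = g x" if "x \<in> space (gauss n)" for x
    using U g that by (rule resample_junta_invariant)
  then have "{x\<in>space (gauss n). h (resample n U z x) \<noteq> g x}
      = {x\<in>space (gauss n). h (resample n U z x) \<noteq> g (resample n U z x)}"
    by auto
  then show ?thesis using hg unfolding eps_close_def by simp
qed

lemma exists_good_resampling_point:
  assumes U: "orthonormal n U" and \<epsilon>: "0 < \<epsilon>" "\<epsilon> \<le> 1"
    and g_meas: "g \<in> borel_measurable (gauss n)" and h_meas: "h \<in> borel_measurable (gauss n)"
    and h_surf: "surf n h \<le> ereal s"
    and hg: "eps_close n (2 * \<epsilon>) h g"
  shows "\<exists>z\<in>space (gauss n). surf n (\<lambda>x. h (resample n U z x)) \<le> ereal (s * (1 + sqrt \<epsilon>)) \<and>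
    measure (gauss n) {x\<in>space (gauss n). h (resample n U z x) \<noteq> g (resample n U z x)} \<le> 5 * sqrt \<epsilon>"
proof -
  interpret prob_space "gauss n" by (rule prob_space_gauss)
  define A where "A = {x\<in>space (gauss n). h x = 1}"
  have A: "A \<in> sets (gauss n)"
    unfolding A_def using borel_measurable_eq[OF h_meas borel_measurable_const] .
  have "0 \<le> ereal s"
    using order.trans[OF gsurf_set_nonneg h_surf[unfolded surf_def]] .
  then have s: "s \<ge> 0" by simp
  obtain d where d: "\<And>m. 0 < d m \<and> d m < 1 / (real m + 1) \<and>
      measure (gauss n) (nbhd n A (d m) - A) / d m < s + 1 / (real m + 1)"
    using h_surf unfolding surf_def gsurf_set_def A_def[symmetric] by (rule Liminf_at_right_le_obtain_seq) blast
  define B where "B m = nbhd n A (d m) - A" for m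
  have B: "B m \<in> sets (gauss n)" for m unfolding B_def using sets_nbhd A by blast
  define F where "F z = liminf (\<lambda>m. ennreal (measure (gauss n) {x\<in>space (gauss n). resample n U z x \<in> B m} / d m))" for z
  have F_meas: "F \<in> borel_measurable (gauss n)"
    unfolding F_def using borel_measurable_emeasure_resample[OF B]
    by (intro borel_measurable_liminf) (simp add: measure_def)
  have int_F: "(\<integral>\<^sup>+z. F z \<partial>gauss n) \<le> ennreal s"
    unfolding F_def using d by (intro nn_integral_liminf_resample_le[OF U B]) (simp_all add: B_def)
  define Bhg where "Bhg = {x\<in>space (gauss n). h x \<noteq> g x}"
  have Bhg: "Bhg \<in> sets (gauss n)"
    unfolding Bhg_def using h_meas g_meas by (rule borel_measurable_neq)
  define D where "D z = emeasure (gauss n) {x\<in>space (gauss n). resample n U z x \<in> Bhg}" for z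
  have int_D: "(\<integral>\<^sup>+z. D z \<partial>gauss n) \<le> ennreal (2 * \<epsilon>)"
    using hg unfolding D_def nn_integral_emeasure_resample[OF U Bhg]
    by (simp add: Bhg_def eps_close_def emeasure_eq_measure ennreal_leI)
  obtain z where z: "z \<in> space (gauss n)" "F z \<le> ennreal (s * (1 + sqrt \<epsilon>))" "D z \<le> ennreal (5 * sqrt \<epsilon>)"
    using exists_point_integrals_small[OF prob_space_gauss F_meas _ int_F int_D s \<epsilon>]
      borel_measurable_emeasure_resample[OF Bhg] unfolding D_def by blast
  have "surf n (\<lambda>x. h (resample n U z x)) \<le> ereal (s * (1 + sqrt \<epsilon>))"
    using z(2) s \<epsilon> d h_meas
    by (intro surf_resample_le[OF U z(1)]) (simp_all add: F_def B_def A_def)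
  moreover have "measure (gauss n) {x\<in>space (gauss n). h (resample n U z x) \<noteq> g (resample n U z x)} \<le> 5 * sqrt \<epsilon>"
    using z(3) \<epsilon> by (simp add: D_def Bhg_def emeasure_eq_measure)
  ultimately show ?thesis using z(1) by blast
qed

lemma junta_approximation_small_eps:
  assumes f: "boolean_fun n f" and \<epsilon>: "0 < \<epsilon>" "\<epsilon> \<le> 1"
    and g: "boolean_fun n g" "linear_junta n k g"
    and h: "boolean_fun n h" "surf n h \<le> ereal s"
    and close: "eps_close n \<epsilon> g f" "eps_close n \<epsilon> h f"
  shows "\<exists>h'. boolean_fun n h' \<and> linear_junta n k h' \<and>
       surf n h' \<le> ereal (s * (1 + sqrt \<epsilon>)) \<and> eps_close n (6 * sqrt \<epsilon>) h' f"
proof -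
  interpret prob_space "gauss n" by (rule prob_space_gauss)
  obtain U G where U: "finite U" "card U \<le> k" "U \<subseteq> space (gauss n)" "\<forall>u\<in>U. ip n u u = 1"
      "\<forall>u\<in>U. \<forall>v\<in>U. u \<noteq> v \<longrightarrow> ip n u v = 0"
    and gG: "\<forall>x\<in>space (gauss n). g x = G (\<lambda>u\<in>U. ip n u x)"
    using g(2) unfolding linear_junta_def by blast
  have ortho: "orthonormal n U" using U by (simp add: orthonormal_def)
  have f_meas: "f \<in> borel_measurable (gauss n)" and g_meas: "g \<in> borel_measurable (gauss n)"
    and h_meas: "h \<in> borel_measurable (gauss n)"
    using f g h by (simp_all add: boolean_fun_def)
  have "eps_close n (\<epsilon> + \<epsilon>) h g"
    by (rule eps_close_trans[OF g_meas f_meas h_meas close(2) eps_close_sym[OF close(1)]])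
  then have "eps_close n (2 * \<epsilon>) h g"
    by (simp only: mult_2)
  then obtain z where z: "z \<in> space (gauss n)"
    "surf n (\<lambda>x. h (resample n U z x)) \<le> ereal (s * (1 + sqrt \<epsilon>))"
    "measure (gauss n) {x\<in>space (gauss n). h (resample n U z x) \<noteq> g (resample n U z x)} \<le> 5 * sqrt \<epsilon>"
    using exists_good_resampling_point[OF ortho \<epsilon> g_meas h_meas h(2)] by auto
  define h' where "h' = (\<lambda>x. h (resample n U z x))"
  have "boolean_fun n h'"
    unfolding h'_def using h(1) measurable_comp[OF measurable_resample_snd[OF z(1)] h_meas]
    by (simp add: boolean_fun_def o_def)
  moreover have "linear_junta n k h'"
    unfolding h'_def using ortho U(2) by (rule linear_junta_resample)
  moreover have "surf n h' \<le> ereal (s * (1 + sqrt \<epsilon>))"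
    unfolding h'_def by (rule z(2))
  moreover have "eps_close n (6 * sqrt \<epsilon>) h' f"
  proof -
    have "eps_close n (5 * sqrt \<epsilon>) h' g"
      unfolding h'_def using gG by (intro eps_close_resample[OF ortho z(1) _ z(3)]) simp
    then have "eps_close n (5 * sqrt \<epsilon> + \<epsilon>) h' f"
      using f_meas g_meas measurable_comp[OF measurable_resample_snd[OF z(1)] h_meas] close(1)
      by (intro eps_close_trans) (simp_all add: h'_def o_def)
    moreover have "\<epsilon> \<le> sqrt \<epsilon>"
      using \<epsilon> by (intro real_le_rsqrt) (simp add: power2_eq_square mult_left_le)
    ultimately show ?thesis unfolding eps_close_def by linarith
  qed
  ultimately show ?thesis by blast
qed

lemma constant_approximation_large_eps:
  assumes "1 < \<epsilon>" "surf n h \<le> ereal s"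
  shows "\<exists>h'. boolean_fun n h' \<and> linear_junta n k h' \<and>
       surf n h' \<le> ereal (s * (1 + sqrt \<epsilon>)) \<and> eps_close n (6 * sqrt \<epsilon>) h' f"
proof -
  interpret prob_space "gauss n" by (rule prob_space_gauss)
  have "0 \<le> ereal s"
    using order.trans[OF gsurf_set_nonneg assms(2)[unfolded surf_def]] .
  then have "surf n (\<lambda>x. 1) \<le> ereal (s * (1 + sqrt \<epsilon>))"
    using assms(1) by (simp add: surf_const_one)
  moreover have "linear_junta n k (\<lambda>x. 1)"
    unfolding linear_junta_def by (intro exI[of _ "{}"] exI[of _ "\<lambda>_. 1"]) auto
  moreover have "eps_close n (6 * sqrt \<epsilon>) (\<lambda>x. 1) f"
    using assms(1) prob_le_1 unfolding eps_close_def by (smt (verit) real_sqrt_gt_1_iff)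
  moreover have "boolean_fun n (\<lambda>x. 1)" by (simp add: boolean_fun_def)
  ultimately show ?thesis by blast
qed

theorem lemma3p6:
  shows "\<exists>C::real. \<forall>(n::nat) (k::nat) (s::real) (\<epsilon>::real) f g h.
    boolean_fun n f \<and> \<epsilon> > 0 \<and>
    boolean_fun n g \<and> linear_junta n k g \<and>
    boolean_fun n h \<and> surf n h \<le> ereal s \<and>
    eps_close n \<epsilon> g f \<and> eps_close n \<epsilon> h f \<longrightarrow>
    (\<exists>h'. boolean_fun n h' \<and> linear_junta n k h' \<and>
       surf n h' \<le> ereal (s * (1 + sqrt \<epsilon>)) \<and> eps_close n (C * sqrt \<epsilon>) h' f)"
proof (intro exI[of _ 6] allI impI)
  fix n k :: nat and s \<epsilon> :: real and f g h :: "(nat \<Rightarrow> real) \<Rightarrow> real"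
  assume H: "boolean_fun n f \<and> \<epsilon> > 0 \<and> boolean_fun n g \<and> linear_junta n k g \<and>
    boolean_fun n h \<and> surf n h \<le> ereal s \<and> eps_close n \<epsilon> g f \<and> eps_close n \<epsilon> h f"
  show "\<exists>h'. boolean_fun n h' \<and> linear_junta n k h' \<and>
       surf n h' \<le> ereal (s * (1 + sqrt \<epsilon>)) \<and> eps_close n (6 * sqrt \<epsilon>) h' f"
  proof (cases "\<epsilon> \<le> 1")
    case True
    then show ?thesis using H junta_approximation_small_eps by blast
  next
    case False
    then show ?thesis using H by (intro constant_approximation_large_eps) auto
  qed
qed

end
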